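(* Fix $A\in\mathbb R$ and $T>0$. There is $C=C(A,T)$, not depending on $\epsilon$, such that for all sufficiently small $\epsilon>0$, all $0\le s<t\le\epsilon^{-2}T$, all $x,y\in\mathbb Z_{\ge0}$ and all $v\in[0,1]$, $$|\mathbf p_t^R(x,y)-\mathbf p_s^R(x,y)|\le C\,(1\wedge s^{-1/2-v})\,(t-s)^v.$$
   Context: Let $p_t(x)$, $x\in\mathbb Z$, denote the whole-line semi-discrete heat kernel, i.e. the solution of $\partial_tp_t(x)=\frac12\Delta p_t(x)$, $p_0(x)=1_{\{x=0\}}$, where $\Delta f(x)=f(x+1)+f(x-1)-2f(x)$. For $\epsilon>0$ let $\mu_A=1-A\epsilon$. The half-line Robin heat kernel is, for $t\ge0$ and $x,y\in\mathbb Z_{\ge0}$, $$\mathbf p_t^R(x,y)=p_t(x-y)+\mu_Ap_t(x+y+1)+(1-\mu_A^{-2})\sum_{z=2}^\infty p_t(x+y+z)\mu_A^z.$$ *)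

theory Defs
  imports "HOL-Analysis.Analysis"
begin

text \<open>Whole-line semi-discrete heat kernel: the solution of
  d/dt p_t(x) = 1/2 (p_t(x+1) + p_t(x-1) - 2 p_t(x)), p_0(x) = [x = 0],
  given by its explicit (modified Bessel function) series
  p_t(x) = e^{-t} I_{|x|}(t) = e^{-t} sum_k (t/2)^(2k+|x|) / (k! (k+|x|)!).\<close>
definition heat_kernel :: "real \<Rightarrow> int \<Rightarrow> real" where
  "heat_kernel t x = exp (- t) *
     (\<Sum>k. (t / 2) ^ (2 * k + nat \<bar>x\<bar>) / (fact k * fact (k + nat \<bar>x\<bar>)))"

definition muA :: "real \<Rightarrow> real \<Rightarrow> real" where
  "muA A \<epsilon> = 1 - A * \<epsilon>"

text \<open>Half-line Robin heat kernel; the sum over z \<ge> 2 is reindexed as z = j + 2.\<close>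
definition robin_kernel :: "real \<Rightarrow> real \<Rightarrow> real \<Rightarrow> nat \<Rightarrow> nat \<Rightarrow> real" where
  "robin_kernel A \<epsilon> t x y =
     heat_kernel t (int x - int y)
     + muA A \<epsilon> * heat_kernel t (int x + int y + 1)
     + (1 - (muA A \<epsilon>) powi (-2)) *
       (\<Sum>j. heat_kernel t (int x + int y + int (j + 2)) * (muA A \<epsilon>) ^ (j + 2))"

text \<open>The factor 1 \<and> s^{-1/2-v}, with the convention s^{-1/2-v} = +\<infinity> at s = 0.\<close>
definition min_one_pow :: "real \<Rightarrow> real \<Rightarrow> real" where
  "min_one_pow s v = (if s = 0 then 1 else min 1 (s powr (- 1/2 - v)))"

end

theory Submission
  imports Defs
begin

text \<open>
  Expanding exp (t cos \<theta>) in powers of cos \<theta> and recognising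
  1/(2\<pi>) \<integral> cos \<theta> ^ m cos (n \<theta>) d\<theta> as the probability that a simple random walk is at n
  after m steps turns the Bessel series defining p_t into the Fourier integral
  p_t(n) = 1/(2\<pi>) \<integral> exp (- t (1 - cos \<theta>)) cos (n \<theta>) d\<theta> over [-\<pi>, \<pi>].
  There 1 - cos \<theta> \<ge> \<theta>^2/12, so the weight is Gaussian, and with \<langle>t\<rangle> = max 1 t one gets
  |p_t| = O(\<langle>t\<rangle>^(-1/2)), |\<nabla>p_t| = O(\<langle>t\<rangle>^(-1)) and |\<partial>_t p_t| = |\<Delta>p_t|/2 = O(\<langle>t\<rangle>^(-3/2)).
  Every f with |f| = O(\<langle>t\<rangle>^(-1/2)) and |f'| = O(\<langle>t\<rangle>^(-3/2)) satisfies the Hoelder bound: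
  use the mean value theorem when t - s \<le> \<langle>s\<rangle> and the bound |f t| + |f s| otherwise.

  This handles the first two terms of the Robin kernel.  The third is (\<mu>^2 - 1) S_t with
  S_t = \<Sum>_j \<mu>^j p_t(c + j).  Exponential moments of the walk give S_t \<le> exp (t \<kappa>) with
  \<kappa> = (\<mu> + 1/\<mu>)/2 - 1 = O(\<epsilon>^2), which is bounded for t \<le> T/\<epsilon>^2, and summation by parts gives
  \<partial>_t S_t = \<kappa> S_t + (p_t(c - 1) - p_t(c)/\<mu>)/2.  In the same range of t the prefactor
  \<mu>^2 - 1 = O(\<epsilon>) is O(\<langle>t\<rangle>^(-1/2)), so the third term decays like the heat kernel.
\<close>

section \<open>Random walk probabilities and the Bessel series\<close>

fun walk_prob :: "nat \<Rightarrow> int \<Rightarrow> real" where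
  "walk_prob 0 n = (if n = 0 then 1 else 0)"
| "walk_prob (Suc m) n = (walk_prob m (n + 1) + walk_prob m (n - 1)) / 2"

lemma walk_prob_nonneg: "0 \<le> walk_prob m n"
  by (induction m arbitrary: n) auto

lemma walk_prob_le_one: "walk_prob m n \<le> 1"
proof (induction m arbitrary: n)
  case (Suc m)
  show ?case using Suc[of "n + 1"] Suc[of "n - 1"] by simp
qed simp

lemma walk_prob_uminus: "walk_prob m (- n) = walk_prob m n"
proof (induction m arbitrary: n)
  case (Suc m)
  have shift: "- n + 1 = - (n - 1)" "- n - 1 = - (n + 1)" by simp_all
  show ?case unfolding walk_prob.simps shift Suc.IH by simp
qed simp

lemma walk_prob_eq_0:
  "n \<notin> (\<lambda>k. 2 * int k - int m) ` {..m} \<Longrightarrow> walk_prob m n = 0"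
proof (induction m arbitrary: n)
  case (Suc m)
  have "n + 1 \<notin> (\<lambda>k. 2 * int k - int m) ` {..m}"
  proof
    assume "n + 1 \<in> (\<lambda>k. 2 * int k - int m) ` {..m}"
    then obtain k where "k \<le> m" "n + 1 = 2 * int k - int m" by auto
    then have "k \<le> Suc m" "n = 2 * int k - int (Suc m)" by auto
    with Suc.prems show False by blast
  qed
  moreover have "n - 1 \<notin> (\<lambda>k. 2 * int k - int m) ` {..m}"
  proof
    assume "n - 1 \<in> (\<lambda>k. 2 * int k - int m) ` {..m}"
    then obtain k where "k \<le> m" "n - 1 = 2 * int k - int m" by auto
    then have "Suc k \<le> Suc m" "n = 2 * int (Suc k) - int (Suc m)" by auto
    with Suc.prems show False by blast
  qed
  ultimately show ?case using Suc.IH by simp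
qed auto

lemma walk_prob_binomial: "walk_prob m (2 * int k - int m) = real (m choose k) / 2 ^ m"
proof (induction m arbitrary: k)
  case (Suc m)
  show ?case
  proof (cases k)
    case 0
    have "walk_prob m (- int m - 2) = 0"
      by (rule walk_prob_eq_0) auto
    then show ?thesis using Suc.IH[of 0] 0 by (simp add: algebra_simps)
  next
    case (Suc j)
    have up: "2 * int k - int (Suc m) + 1 = 2 * int (Suc j) - int m"
      and down: "2 * int k - int (Suc m) - 1 = 2 * int j - int m" using Suc by simp_all
    show ?thesis unfolding walk_prob.simps up down Suc.IH using Suc by (simp add: add_divide_distrib)
  qed
qed auto

lemma walk_prob_exp_moment:
  assumes "q > 0" "finite S"
  shows "(\<Sum>n\<in>S. q powi n * walk_prob m n) \<le> ((q + inverse q) / 2) ^ m"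
  using assms(2)
proof (induction m arbitrary: S)
  case 0
  then show ?case
    by (cases "0 \<in> S") (auto simp: sum.If_cases if_distrib cong: if_cong)
next
  case (Suc m)
  have up: "(\<Sum>n\<in>S. q powi n * walk_prob m (n + 1))
      = inverse q * (\<Sum>n\<in>(\<lambda>n. n + 1) ` S. q powi n * walk_prob m n)"
    by (subst sum.reindex) (use \<open>q > 0\<close> in \<open>auto simp: inj_on_def sum_distrib_left power_int_add_1 field_simps\<close>)
  have down: "(\<Sum>n\<in>S. q powi n * walk_prob m (n - 1))
      = q * (\<Sum>n\<in>(\<lambda>n. n - 1) ` S. q powi n * walk_prob m n)"
    by (subst sum.reindex) (use \<open>q > 0\<close> in \<open>auto simp: inj_on_def sum_distrib_left power_int_diff field_simps\<close>)
  have "(\<Sum>n\<in>S. q powi n * walk_prob (Suc m) n)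
      = ((\<Sum>n\<in>S. q powi n * walk_prob m (n + 1)) + (\<Sum>n\<in>S. q powi n * walk_prob m (n - 1))) / 2"
    by (simp add: sum_divide_distrib[symmetric] sum.distrib[symmetric] distrib_left)
  also have "\<dots> \<le> (inverse q * ((q + inverse q) / 2) ^ m + q * ((q + inverse q) / 2) ^ m) / 2"
    unfolding up down using Suc \<open>q > 0\<close> by (intro divide_right_mono add_mono mult_left_mono) auto
  also have "\<dots> = ((q + inverse q) / 2) ^ Suc m" by (simp add: field_simps)
  finally show ?case .
qed

text \<open>The modified Bessel function I_|n|(r), with the random walk probabilities as Taylor
  coefficients.\<close>
definition besselI :: "real \<Rightarrow> int \<Rightarrow> real" where
  "besselI r n = (\<Sum>m. walk_prob m n / fact m * r ^ m)"

lemma summable_besselI: "summable (\<lambda>m. walk_prob m n / fact m * r ^ m)"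
proof (rule summable_comparison_test[OF _ summable_exp[of "\<bar>r\<bar>"]])
  have "\<bar>walk_prob m n / fact m * r ^ m\<bar> \<le> inverse (fact m) * \<bar>r\<bar> ^ m" for m
    using walk_prob_nonneg[of m n] walk_prob_le_one[of m n]
    by (simp add: abs_mult power_abs divide_inverse mult_left_le_one_le)
  then show "\<exists>N. \<forall>m\<ge>N. norm (walk_prob m n / fact m * r ^ m) \<le> inverse (fact m) * \<bar>r\<bar> ^ m"
    by auto
qed

lemma heat_kernel_eq_besselI: "heat_kernel r n = exp (- r) * besselI r n"
proof -
  define N where "N = nat \<bar>n\<bar>"
  define c where "c m = walk_prob m (int N) / fact m * r ^ m" for m
  have "walk_prob m (int N) = walk_prob m n" for m
    using walk_prob_uminus[of m n] by (cases "n \<ge> 0") (auto simp: N_def)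
  then have "c sums besselI r n"
    unfolding c_def besselI_def by (simp only: summable_sums[OF summable_besselI])
  moreover have "c m = 0" if "m \<notin> range (\<lambda>k. N + 2 * k)" for m
  proof -
    have "int N \<notin> (\<lambda>k. 2 * int k - int m) ` {..m}"
    proof
      assume "int N \<in> (\<lambda>k. 2 * int k - int m) ` {..m}"
      then obtain k where "k \<le> m" "int N = 2 * int k - int m" by auto
      then have "m = N + 2 * (k - N)" by linarith
      with that show False by blast
    qed
    then show ?thesis unfolding c_def by (simp add: walk_prob_eq_0)
  qed
  ultimately have "(\<lambda>k. c (N + 2 * k)) sums besselI r n"
    using sums_mono_reindex[of "\<lambda>k. N + 2 * k" c] by (simp add: strict_mono_def)
  moreover have "c (N + 2 * k) = (r / 2) ^ (2 * k + N) / (fact k * fact (k + N))" for k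
  proof -
    have "walk_prob (N + 2 * k) (int N) = real ((N + 2 * k) choose (N + k)) / 2 ^ (N + 2 * k)"
      using walk_prob_binomial[of "N + 2 * k" "N + k"] by simp
    also have "\<dots> = fact (N + 2 * k) / (fact (N + k) * fact k) / 2 ^ (N + 2 * k)"
      by (subst binomial_fact) (auto simp: algebra_simps)
    finally show ?thesis
      unfolding c_def by (simp add: field_simps power_divide add.commute mult.commute)
  qed
  ultimately show ?thesis unfolding heat_kernel_def N_def by (simp add: sums_iff)
qed

lemma besselI_nonneg: "0 \<le> r \<Longrightarrow> 0 \<le> besselI r n"
  unfolding besselI_def by (intro suminf_nonneg summable_besselI) (simp add: walk_prob_nonneg)

lemma besselI_mono: "0 \<le> r \<Longrightarrow> r \<le> R \<Longrightarrow> besselI r n \<le> besselI R n"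
  unfolding besselI_def
  by (intro suminf_le summable_besselI mult_left_mono power_mono divide_nonneg_pos walk_prob_nonneg) auto

lemma abs_besselI_le: "\<bar>besselI r n\<bar> \<le> besselI \<bar>r\<bar> n"
proof -
  have "\<bar>walk_prob m n / fact m * r ^ m\<bar> = walk_prob m n / fact m * \<bar>r\<bar> ^ m" for m
    using walk_prob_nonneg[of m n] by (simp add: abs_mult power_abs)
  then show ?thesis
    unfolding besselI_def using summable_rabs[of "\<lambda>m. walk_prob m n / fact m * r ^ m"]
      summable_besselI[of n "\<bar>r\<bar>"] by simp
qed

lemma besselI_has_real_derivative:
  "((\<lambda>r. besselI r n) has_real_derivative (besselI r (n + 1) + besselI r (n - 1)) / 2) (at r)"
proof -
  define c where "c m = walk_prob m n / fact m" for m
  have "diffs c m = walk_prob (Suc m) n / fact m" for m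
    unfolding diffs_def c_def fact_Suc by (simp del: of_nat_Suc)
  then have "diffs c m * r ^ m = walk_prob m (n + 1) / fact m * r ^ m / 2 + walk_prob m (n - 1) / fact m * r ^ m / 2" for m
    by (simp add: add_divide_distrib algebra_simps)
  then have "(\<Sum>m. diffs c m * r ^ m) = (\<Sum>m. walk_prob m (n + 1) / fact m * r ^ m / 2)
      + (\<Sum>m. walk_prob m (n - 1) / fact m * r ^ m / 2)"
    by (simp only: suminf_add summable_divide summable_besselI)
  also have "\<dots> = (besselI r (n + 1) + besselI r (n - 1)) / 2"
    unfolding besselI_def by (simp only: suminf_divide summable_besselI add_divide_distrib)
  finally have "(\<Sum>m. diffs c m * r ^ m) = (besselI r (n + 1) + besselI r (n - 1)) / 2" .
  moreover have "((\<lambda>r. \<Sum>m. c m * r ^ m) has_real_derivative (\<Sum>m. diffs c m * r ^ m)) (at r)"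
    unfolding c_def by (rule termdiffs_strong_converges_everywhere summable_besselI)+
  ultimately show ?thesis unfolding c_def besselI_def[symmetric] by (simp only:)
qed

lemma heat_kernel_nonneg: "0 \<le> r \<Longrightarrow> 0 \<le> heat_kernel r n"
  by (simp add: heat_kernel_eq_besselI besselI_nonneg)

lemma abs_heat_kernel_le_heat_kernel:
  assumes "\<bar>r\<bar> \<le> R"
  shows "\<bar>heat_kernel r n\<bar> \<le> exp (2 * R) * heat_kernel R n"
proof -
  have "\<bar>heat_kernel r n\<bar> \<le> exp R * besselI R n"
    unfolding heat_kernel_eq_besselI abs_mult using assms abs_besselI_le[of r n] besselI_mono[of "\<bar>r\<bar>" R n]
    by (intro mult_mono) auto
  then show ?thesis by (simp add: heat_kernel_eq_besselI mult.assoc[symmetric] mult_exp_exp)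
qed

definition heat_laplacian :: "real \<Rightarrow> int \<Rightarrow> real" where
  "heat_laplacian r n = (heat_kernel r (n + 1) + heat_kernel r (n - 1)) / 2 - heat_kernel r n"

lemma heat_kernel_has_real_derivative:
  "((\<lambda>r. heat_kernel r n) has_real_derivative heat_laplacian r n) (at r)"
  unfolding heat_kernel_eq_besselI[abs_def] heat_laplacian_def heat_kernel_eq_besselI
  by (rule derivative_eq_intros besselI_has_real_derivative refl | simp add: algebra_simps add_divide_distrib)+

definition exp_moment_rate :: "real \<Rightarrow> real" where
  "exp_moment_rate q = (q + inverse q) / 2 - 1"

lemma heat_kernel_exp_moment:
  assumes "q > 0" "0 \<le> r" "finite S"
  shows "(\<Sum>n\<in>S. q powi n * heat_kernel r n) \<le> exp (r * exp_moment_rate q)"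
proof -
  define a where "a = (q + inverse q) / 2"
  have "(\<Sum>n\<in>S. q powi n * besselI r n) = (\<Sum>n\<in>S. \<Sum>m. q powi n * (walk_prob m n / fact m * r ^ m))"
    unfolding besselI_def by (intro sum.cong refl suminf_mult[symmetric] summable_besselI)
  also have "\<dots> = (\<Sum>m. \<Sum>n\<in>S. q powi n * (walk_prob m n / fact m * r ^ m))"
    by (intro suminf_sum[symmetric] summable_mult summable_besselI)
  also have "\<dots> \<le> (\<Sum>m. inverse (fact m) * (r * a) ^ m)"
  proof (rule suminf_le)
    have "(\<Sum>n\<in>S. q powi n * (walk_prob m n / fact m * r ^ m)) = r ^ m / fact m * (\<Sum>n\<in>S. q powi n * walk_prob m n)" for m
      by (simp add: sum_distrib_left mult_ac)
    also have "\<dots> m \<le> r ^ m / fact m * a ^ m" for m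
      unfolding a_def using assms by (intro mult_left_mono walk_prob_exp_moment) auto
    finally show "(\<Sum>n\<in>S. q powi n * (walk_prob m n / fact m * r ^ m)) \<le> inverse (fact m) * (r * a) ^ m" for m
      by (simp add: power_mult_distrib divide_inverse mult_ac)
  qed (use summable_besselI summable_exp[of "r * a"] in
         \<open>auto intro!: summable_sum summable_mult simp: divide_inverse mult.commute\<close>)
  also have "\<dots> = exp (r * a)"
    using exp_converges[of "r * a"] by (simp add: sums_iff)
  finally have "exp (- r) * (\<Sum>n\<in>S. q powi n * besselI r n) \<le> exp (- r) * exp (r * a)"
    by simp
  then show ?thesis
    by (simp add: heat_kernel_eq_besselI sum_distrib_left mult_ac exp_moment_rate_def a_def
        mult_exp_exp algebra_simps)
qed

section \<open>Fourier representation\<close>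

lemma has_integral_cos_int_mult:
  "((\<lambda>\<theta>. cos (of_int n * \<theta>)) has_integral (if n = 0 then 2 * pi else 0)) {-pi..pi}"
proof (cases "n = 0")
  case True
  then show ?thesis using has_integral_const_real[of "1 :: real" "-pi" pi] by simp
next
  case False
  have "((\<lambda>\<theta>. cos (of_int n * \<theta>)) has_integral
      (sin (of_int n * pi) / of_int n - sin (of_int n * (-pi)) / of_int n)) {-pi..pi}"
    by (rule fundamental_theorem_of_calculus)
       (use False in \<open>auto intro!: derivative_eq_intros simp: has_real_derivative_iff_has_vector_derivative[symmetric]\<close>)
  moreover have "sin (of_int n * pi) = 0"
    by (metis sin_times_pi_eq_0 mult.commute Ints_of_int)
  ultimately show ?thesis using False by simp
qed

lemma walk_prob_fourier:
  "((\<lambda>\<theta>. cos \<theta> ^ m * cos (of_int n * \<theta>)) has_integral 2 * pi * walk_prob m n) {-pi..pi}"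
proof (induction m arbitrary: n)
  case 0
  then show ?case using has_integral_cos_int_mult[of n] by (cases "n = 0") auto
next
  case (Suc m)
  have split: "cos \<theta> ^ Suc m * cos (of_int n * \<theta>)
      = cos \<theta> ^ m * cos (of_int (n + 1) * \<theta>) / 2 + cos \<theta> ^ m * cos (of_int (n - 1) * \<theta>) / 2"
    for \<theta> :: real
    by (simp add: cos_add cos_diff field_simps)
  show ?case
    unfolding split
    by (rule has_integral_eq_rhs[OF has_integral_add[OF has_integral_divide[OF Suc.IH] has_integral_divide[OF Suc.IH]]])
       (simp add: algebra_simps)
qed

lemma has_integral_exp_cos_mult_cos:
  "((\<lambda>\<theta>. exp (r * cos \<theta>) * cos (of_int n * \<theta>)) has_integral 2 * pi * besselI r n) {-pi..pi}"
proof -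
  define f where "f m \<theta> = (r * cos \<theta>) ^ m / fact m * cos (of_int n * \<theta>)" for m \<theta>
  have f_le: "norm (f m \<theta>) \<le> inverse (fact m) * \<bar>r\<bar> ^ m" for m \<theta>
  proof -
    have "norm (f m \<theta>) = inverse (fact m) * \<bar>r\<bar> ^ m * (\<bar>cos \<theta>\<bar> ^ m * \<bar>cos (of_int n * \<theta>)\<bar>)"
      by (simp add: f_def abs_mult power_abs power_mult_distrib divide_inverse)
    also have "\<dots> \<le> inverse (fact m) * \<bar>r\<bar> ^ m * (1 * 1)"
      by (intro mult_left_mono mult_mono power_le_one) auto
    finally show ?thesis by simp
  qed
  have f_sum: "(\<Sum>m. f m \<theta>) = exp (r * cos \<theta>) * cos (of_int n * \<theta>)" for \<theta>
  proof -
    have "(\<lambda>m. (r * cos \<theta>) ^ m /\<^sub>R fact m * cos (of_int n * \<theta>)) sums (exp (r * cos \<theta>) * cos (of_int n * \<theta>))"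
      by (rule sums_mult2[OF exp_converges])
    then show ?thesis unfolding f_def by (simp add: sums_iff divide_inverse mult_ac)
  qed
  have "uniform_limit {-pi..pi} (\<lambda>N \<theta>. \<Sum>m<N. f m \<theta>) (\<lambda>\<theta>. \<Sum>m. f m \<theta>) sequentially"
    by (rule Weierstrass_m_test[where M = "\<lambda>m. inverse (fact m) * \<bar>r\<bar> ^ m"])
       (use f_le summable_exp in auto)
  then have "uniform_limit {-pi..pi} (\<lambda>N \<theta>. \<Sum>m<N. f m \<theta>) (\<lambda>\<theta>. exp (r * cos \<theta>) * cos (of_int n * \<theta>)) sequentially"
    by (simp add: f_sum)
  moreover have "continuous_on {-pi..pi} (\<lambda>\<theta>. \<Sum>m<N. f m \<theta>)" for N
    unfolding f_def by (auto intro!: continuous_intros)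
  ultimately obtain I J where
      I: "\<And>N. ((\<lambda>\<theta>. \<Sum>m<N. f m \<theta>) has_integral I N) {-pi..pi}"
    and J: "((\<lambda>\<theta>. exp (r * cos \<theta>) * cos (of_int n * \<theta>)) has_integral J) {-pi..pi}"
    and IJ: "I \<longlonglongrightarrow> J"
    by (rule uniform_limit_integral) auto
  have "(f m has_integral 2 * pi * (walk_prob m n / fact m * r ^ m)) {-pi..pi}" for m
    using has_integral_mult_right[OF walk_prob_fourier, of "r ^ m / fact m" m n]
    by (simp add: f_def[abs_def] power_mult_distrib mult_ac)
  then have "I = (\<lambda>N. \<Sum>m<N. 2 * pi * (walk_prob m n / fact m * r ^ m))"
    by (intro ext has_integral_unique[OF I] has_integral_sum) auto
  then have "I \<longlonglongrightarrow> 2 * pi * besselI r n"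
    using sums_mult[OF summable_sums[OF summable_besselI], of "2 * pi" n r]
    by (simp add: sums_def besselI_def)
  with IJ have "J = 2 * pi * besselI r n" by (rule LIMSEQ_unique)
  with J show ?thesis by simp
qed

lemma has_integral_heat_kernel:
  "((\<lambda>\<theta>. exp (- r * (1 - cos \<theta>)) * cos (of_int n * \<theta>)) has_integral 2 * pi * heat_kernel r n) {-pi..pi}"
proof -
  have integrand: "exp (- r * (1 - cos \<theta>)) * cos (of_int n * \<theta>)
      = exp (- r) * (exp (r * cos \<theta>) * cos (of_int n * \<theta>))" for \<theta>
    by (simp add: mult.assoc[symmetric] mult_exp_exp algebra_simps)
  show ?thesis
    unfolding integrand heat_kernel_eq_besselI
    by (rule has_integral_eq_rhs[OF has_integral_mult_right[OF has_integral_exp_cos_mult_cos]]) simp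
qed

section \<open>Decay of the heat kernel\<close>

lemma one_minus_cos_le: "1 - cos x \<le> x\<^sup>2 / 2" for x :: real
proof -
  have "(sin (x / 2))\<^sup>2 \<le> (x / 2)\<^sup>2"
    using abs_sin_x_le_abs_x[of "x / 2"] by (metis abs_ge_zero power2_abs power_mono)
  then show ?thesis using cos_double_sin[of "x / 2"] by (simp add: power_divide)
qed

lemma one_minus_cos_ge:
  fixes x :: real
  assumes "\<bar>x\<bar> \<le> pi"
  shows "x\<^sup>2 / 12 \<le> 1 - cos x"
proof -
  obtain t where "cos x = (\<Sum>m<4. cos_coeff m * x ^ m) + cos (t + 1/2 * real 4 * pi) / fact 4 * x ^ 4"
    using Maclaurin_cos_expansion by blast
  moreover have "cos (t + 1/2 * real 4 * pi) * x ^ 4 \<le> 1 * x ^ 4"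
    by (intro mult_right_mono) auto
  ultimately have "cos x \<le> 1 - x\<^sup>2 / 2 + x ^ 4 / 24"
    by (simp add: eval_nat_numeral cos_coeff_Suc sin_coeff_Suc divide_right_mono)
  moreover have "x\<^sup>2 \<le> 10"
  proof -
    have "x\<^sup>2 \<le> pi\<^sup>2" using assms by (metis abs_ge_zero power2_abs power_mono)
    also have "pi\<^sup>2 \<le> 3.15\<^sup>2" using pi_approx(2) by (intro power_mono) auto
    finally show ?thesis by (simp add: power2_eq_square)
  qed
  then have "x ^ 4 \<le> 10 * x\<^sup>2"
    using mult_right_mono[of "x\<^sup>2" 10 "x\<^sup>2"] by (simp add: power4_eq_xxxx power2_eq_square)
  ultimately show ?thesis by linarith
qed

lemma abs_cos_diff_le: "\<bar>cos a - cos b\<bar> \<le> \<bar>a - b\<bar>" for a b :: real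
proof -
  have "\<bar>cos a - cos b\<bar> = 2 * \<bar>sin ((a + b) / 2)\<bar> * \<bar>sin ((b - a) / 2)\<bar>"
    by (simp add: cos_diff_cos abs_mult)
  also have "\<dots> \<le> 2 * 1 * \<bar>(b - a) / 2\<bar>"
    by (intro mult_mono abs_sin_x_le_abs_x) auto
  finally show ?thesis by simp
qed

lemma has_integral_inverse_one_plus_sq:
  assumes "b > 0"
  shows "((\<lambda>\<theta>. 1 / (1 + b * \<theta>\<^sup>2)) has_integral 2 * arctan (sqrt b * pi) / sqrt b) {-pi..pi}"
proof -
  have "((\<lambda>\<theta>. arctan (sqrt b * \<theta>) / sqrt b) has_real_derivative 1 / (1 + b * \<theta>\<^sup>2)) (at \<theta> within {-pi..pi})"
    for \<theta>
  proof -
    have "1 + b * \<theta>\<^sup>2 > 0" "b + b * (b * \<theta>\<^sup>2) > 0" using assms by (simp_all add: add_pos_nonneg)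
    then show ?thesis
      using assms by (auto intro!: derivative_eq_intros simp: power_mult_distrib field_simps)
  qed
  then have "((\<lambda>\<theta>. 1 / (1 + b * \<theta>\<^sup>2)) has_integral
      arctan (sqrt b * pi) / sqrt b - arctan (sqrt b * - pi) / sqrt b) {-pi..pi}"
    by (intro fundamental_theorem_of_calculus) (auto simp: has_real_derivative_iff_has_vector_derivative)
  then show ?thesis by (simp add: arctan_minus)
qed

lemma sqrt_power_mult_exp_le:
  assumes "0 \<le> u" "k \<le> 2"
  shows "sqrt u ^ k * exp (- u) \<le> 2 / (1 + u)"
proof -
  have "0 \<le> (sqrt u - 1)\<^sup>2" by simp
  then have "sqrt u \<le> (1 + u) / 2" using assms(1) by (simp add: power2_diff)
  consider "k = 0" | "k = 1" | "k = 2" using assms(2) by linarith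
  then have "sqrt u ^ k * (1 + u) \<le> 2 * (1 + u + u\<^sup>2 / 2)"
  proof cases
    case 1
    then show ?thesis using assms(1) by (simp add: power2_eq_square)
  next
    case 2
    have "sqrt u ^ k * (1 + u) \<le> (1 + u) / 2 * (1 + u)"
      using 2 \<open>sqrt u \<le> (1 + u) / 2\<close> assms(1) by (intro mult_right_mono) auto
    also have "\<dots> \<le> 2 * (1 + u + u\<^sup>2 / 2)"
      using assms(1) mult_nonneg_nonneg[OF assms(1) assms(1)] by (simp add: power2_eq_square field_simps)
    finally show ?thesis .
  next
    case 3
    then show ?thesis using assms(1) by (simp add: power2_eq_square field_simps)
  qed
  also have "\<dots> \<le> 2 * exp u" using exp_lower_Taylor_quadratic[OF assms(1)] by simp
  finally show ?thesis using assms(1) by (simp add: exp_minus field_simps)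
qed

lemma integral_gaussian_moment_le:
  assumes "b > 0" "k \<le> 2"
  shows "integral {-pi..pi} (\<lambda>\<theta>. exp (- b * \<theta>\<^sup>2) * \<bar>\<theta>\<bar> ^ k) \<le> 2 * pi / sqrt b ^ (k + 1)"
proof -
  have "exp (- b * \<theta>\<^sup>2) * \<bar>\<theta>\<bar> ^ k \<le> 2 / sqrt b ^ k * (1 / (1 + b * \<theta>\<^sup>2))" for \<theta>
  proof -
    have "exp (- b * \<theta>\<^sup>2) * \<bar>\<theta>\<bar> ^ k = sqrt (b * \<theta>\<^sup>2) ^ k * exp (- (b * \<theta>\<^sup>2)) / sqrt b ^ k"
      using assms(1) by (simp add: real_sqrt_mult power_mult_distrib)
    also have "\<dots> \<le> 2 / (1 + b * \<theta>\<^sup>2) / sqrt b ^ k"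
      using assms by (intro divide_right_mono sqrt_power_mult_exp_le) auto
    finally show ?thesis by (simp add: ac_simps)
  qed
  then have "integral {-pi..pi} (\<lambda>\<theta>. exp (- b * \<theta>\<^sup>2) * \<bar>\<theta>\<bar> ^ k)
      \<le> 2 / sqrt b ^ k * (2 * arctan (sqrt b * pi) / sqrt b)"
    by (intro has_integral_le[OF integrable_integral has_integral_mult_right[OF has_integral_inverse_one_plus_sq]])
       (use assms in \<open>auto intro!: integrable_continuous_interval continuous_intros\<close>)
  also have "\<dots> \<le> 2 / sqrt b ^ k * (pi / sqrt b)"
    using arctan_ubound[of "sqrt b * pi"] assms by (intro mult_left_mono divide_right_mono) auto
  finally show ?thesis by (simp add: field_simps)
qed

lemma heat_weight_le_gaussian:
  assumes "0 \<le> r" "\<bar>\<theta>\<bar> \<le> pi"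
  shows "exp (- r * (1 - cos \<theta>)) \<le> exp (pi\<^sup>2 / 12) * exp (- (max 1 r / 12) * \<theta>\<^sup>2)"
proof -
  have "\<theta>\<^sup>2 \<le> pi\<^sup>2" using assms(2) by (metis abs_ge_zero power2_abs power_mono)
  have "max 1 r * \<theta>\<^sup>2 / 12 \<le> \<theta>\<^sup>2 / 12 + r * (\<theta>\<^sup>2 / 12)"
    using assms(1) by (simp add: max_def field_simps)
  also have "\<dots> \<le> pi\<^sup>2 / 12 + r * (1 - cos \<theta>)"
    using assms one_minus_cos_ge[of \<theta>] \<open>\<theta>\<^sup>2 \<le> pi\<^sup>2\<close> by (intro add_mono mult_left_mono) auto
  finally show ?thesis by (simp add: mult_exp_exp)
qed

definition heat_const :: real where
  "heat_const = exp (pi\<^sup>2 / 12) * sqrt 12 ^ 3"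

lemma integral_heat_weight_moment_le:
  assumes "0 \<le> r" "k \<le> 2"
  shows "integral {-pi..pi} (\<lambda>\<theta>. exp (- r * (1 - cos \<theta>)) * \<bar>\<theta>\<bar> ^ k)
           \<le> 2 * pi * heat_const * max 1 r powr (- (real k + 1) / 2)"
proof -
  define R where "R = max 1 r"
  have R: "R \<ge> 1" by (simp add: R_def)
  have "integral {-pi..pi} (\<lambda>\<theta>. exp (- r * (1 - cos \<theta>)) * \<bar>\<theta>\<bar> ^ k)
      \<le> integral {-pi..pi} (\<lambda>\<theta>. exp (pi\<^sup>2 / 12) * (exp (- (R / 12) * \<theta>\<^sup>2) * \<bar>\<theta>\<bar> ^ k))"
  proof (intro integral_le integrable_continuous_interval continuous_intros)
    fix \<theta> :: real assume "\<theta> \<in> {-pi..pi}"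
    then have "\<bar>\<theta>\<bar> \<le> pi" by auto
    from mult_right_mono[OF heat_weight_le_gaussian[OF assms(1) this], of "\<bar>\<theta>\<bar> ^ k"]
    show "exp (- r * (1 - cos \<theta>)) * \<bar>\<theta>\<bar> ^ k \<le> exp (pi\<^sup>2 / 12) * (exp (- (R / 12) * \<theta>\<^sup>2) * \<bar>\<theta>\<bar> ^ k)"
      by (simp add: R_def mult.assoc)
  qed
  also have "\<dots> = exp (pi\<^sup>2 / 12) * integral {-pi..pi} (\<lambda>\<theta>. exp (- (R / 12) * \<theta>\<^sup>2) * \<bar>\<theta>\<bar> ^ k)"
    by simp
  also have "\<dots> \<le> exp (pi\<^sup>2 / 12) * (2 * pi / sqrt (R / 12) ^ (k + 1))"
    using R assms(2) by (intro mult_left_mono integral_gaussian_moment_le) auto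
  also have "\<dots> = 2 * pi * exp (pi\<^sup>2 / 12) * sqrt 12 ^ (k + 1) * R powr (- (real k + 1) / 2)"
  proof -
    have "sqrt (R / 12) ^ (k + 1) = R powr ((real k + 1) / 2) / sqrt 12 ^ (k + 1)"
      using R by (simp add: real_sqrt_divide power_divide powr_half_sqrt[symmetric] powr_power
          powr_add[symmetric] add_divide_distrib add.commute)
    moreover have "R powr (- (real k + 1) / 2) = 1 / R powr ((real k + 1) / 2)"
      using powr_minus_divide[of R "(real k + 1) / 2"] by (simp only: minus_divide_left)
    ultimately show ?thesis using R by simp
  qed
  also have "\<dots> \<le> 2 * pi * heat_const * R powr (- (real k + 1) / 2)"
  proof -
    have "sqrt 12 ^ (k + 1) \<le> sqrt (12::real) ^ 3"
      using assms(2) by (intro power_increasing) auto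
    then show ?thesis unfolding heat_const_def by (intro mult_right_mono mult_left_mono) auto
  qed
  finally show ?thesis unfolding R_def .
qed

lemma abs_le_heat_weight_moment:
  assumes "(f has_integral 2 * pi * I) {-pi..pi}" "0 \<le> r" "k \<le> 2" "0 \<le> c"
    and "\<And>\<theta>. \<theta> \<in> {-pi..pi} \<Longrightarrow> \<bar>f \<theta>\<bar> \<le> c * (exp (- r * (1 - cos \<theta>)) * \<bar>\<theta>\<bar> ^ k)"
  shows "\<bar>I\<bar> \<le> c * heat_const * max 1 r powr (- (real k + 1) / 2)"
proof -
  have "2 * pi * \<bar>I\<bar> = norm (integral {-pi..pi} f)"
    using assms(1) by (simp add: integral_unique abs_mult)
  also have "\<dots> \<le> integral {-pi..pi} (\<lambda>\<theta>. c * (exp (- r * (1 - cos \<theta>)) * \<bar>\<theta>\<bar> ^ k))"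
    using assms(5) by (intro integral_norm_bound_integral has_integral_integrable[OF assms(1)]
        integrable_continuous_interval continuous_intros) auto
  also have "\<dots> = c * integral {-pi..pi} (\<lambda>\<theta>. exp (- r * (1 - cos \<theta>)) * \<bar>\<theta>\<bar> ^ k)"
    by simp
  also have "\<dots> \<le> c * (2 * pi * heat_const * max 1 r powr (- (real k + 1) / 2))"
    using assms(2-4) by (intro mult_left_mono integral_heat_weight_moment_le) auto
  also have "\<dots> = 2 * pi * (c * heat_const * max 1 r powr (- (real k + 1) / 2))"
    by (simp add: mult_ac)
  finally show ?thesis by (rule mult_left_le_imp_le) simp
qed

lemma abs_heat_kernel_le:
  assumes "0 \<le> r"
  shows "\<bar>heat_kernel r n\<bar> \<le> heat_const * max 1 r powr (- 1 / 2)"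
proof -
  have "\<bar>heat_kernel r n\<bar> \<le> 1 * heat_const * max 1 r powr (- (real 0 + 1) / 2)"
    using assms by (intro abs_le_heat_weight_moment[OF has_integral_heat_kernel])
      (auto simp: abs_mult intro: mult_left_le)
  then show ?thesis by simp
qed

lemma abs_heat_kernel_diff_le:
  assumes "0 \<le> r"
  shows "\<bar>heat_kernel r (n + 1) - heat_kernel r n\<bar> \<le> heat_const * max 1 r powr (- 1)"
proof -
  define w where "w \<theta> = exp (- r * (1 - cos \<theta>))" for \<theta> :: real
  have "((\<lambda>\<theta>. w \<theta> * cos (of_int (n + 1) * \<theta>) - w \<theta> * cos (of_int n * \<theta>))
      has_integral 2 * pi * (heat_kernel r (n + 1) - heat_kernel r n)) {-pi..pi}"
    unfolding w_def
    by (rule has_integral_eq_rhs[OF has_integral_diff[OF has_integral_heat_kernel has_integral_heat_kernel]])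
       (simp add: algebra_simps)
  moreover have "\<bar>w \<theta> * cos (of_int (n + 1) * \<theta>) - w \<theta> * cos (of_int n * \<theta>)\<bar> \<le> 1 * (w \<theta> * \<bar>\<theta>\<bar> ^ 1)" for \<theta>
  proof -
    have "\<bar>w \<theta> * cos (of_int (n + 1) * \<theta>) - w \<theta> * cos (of_int n * \<theta>)\<bar>
        = w \<theta> * \<bar>cos (of_int (n + 1) * \<theta>) - cos (of_int n * \<theta>)\<bar>"
      by (simp add: w_def abs_mult right_diff_distrib[symmetric])
    also have "\<dots> \<le> w \<theta> * \<bar>of_int (n + 1) * \<theta> - of_int n * \<theta>\<bar>"
      by (intro mult_left_mono abs_cos_diff_le) (simp add: w_def)
    finally show ?thesis by (simp add: algebra_simps)
  qed
  ultimately have "\<bar>heat_kernel r (n + 1) - heat_kernel r n\<bar> \<le> 1 * heat_const * max 1 r powr (- (real 1 + 1) / 2)"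
    using assms by (intro abs_le_heat_weight_moment) (auto simp: w_def)
  then show ?thesis by simp
qed

lemma abs_heat_laplacian_le:
  assumes "0 \<le> r"
  shows "\<bar>heat_laplacian r n\<bar> \<le> heat_const * max 1 r powr (- 3 / 2)"
proof -
  define w where "w \<theta> = exp (- r * (1 - cos \<theta>))" for \<theta> :: real
  have "((\<lambda>\<theta>. (w \<theta> * cos (of_int (n + 1) * \<theta>) + w \<theta> * cos (of_int (n - 1) * \<theta>)) / 2 - w \<theta> * cos (of_int n * \<theta>))
      has_integral 2 * pi * heat_laplacian r n) {-pi..pi}"
    unfolding w_def heat_laplacian_def
    by (rule has_integral_eq_rhs[OF has_integral_diff[OF has_integral_divide[OF has_integral_add[OF
          has_integral_heat_kernel has_integral_heat_kernel]] has_integral_heat_kernel]])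
       (simp add: algebra_simps)
  moreover have "\<bar>(w \<theta> * cos (of_int (n + 1) * \<theta>) + w \<theta> * cos (of_int (n - 1) * \<theta>)) / 2 - w \<theta> * cos (of_int n * \<theta>)\<bar>
      \<le> 1 / 2 * (w \<theta> * \<bar>\<theta>\<bar> ^ 2)" for \<theta>
  proof -
    have "(w \<theta> * cos (of_int (n + 1) * \<theta>) + w \<theta> * cos (of_int (n - 1) * \<theta>)) / 2 - w \<theta> * cos (of_int n * \<theta>)
        = w \<theta> * cos (of_int n * \<theta>) * (cos \<theta> - 1)"
      by (simp add: cos_add cos_diff algebra_simps)
    also have "\<bar>\<dots>\<bar> \<le> w \<theta> * 1 * (\<theta>\<^sup>2 / 2)"
      unfolding abs_mult using one_minus_cos_le[of \<theta>]
      by (intro mult_mono) (auto simp: w_def)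
    finally show ?thesis by simp
  qed
  ultimately have "\<bar>heat_laplacian r n\<bar> \<le> 1 / 2 * heat_const * max 1 r powr (- (real 2 + 1) / 2)"
    using assms by (intro abs_le_heat_weight_moment) (auto simp: w_def)
  moreover have "0 \<le> heat_const * max 1 r powr (- 3 / 2)"
    by (simp add: heat_const_def)
  ultimately show ?thesis by simp
qed

section \<open>Hoelder bounds from decay bounds\<close>

lemma min_one_le_powr:
  fixes q v :: real
  assumes "0 \<le> q" "0 \<le> v" "v \<le> 1"
  shows "min 1 q \<le> q powr v"
proof (cases "q \<le> 1")
  case True
  show ?thesis
  proof (cases "q = 0")
    case False
    then have "q powr 1 \<le> q powr v" using True assms by (intro powr_mono') auto
    then show ?thesis using assms(1) by simp
  qed simp
next
  case False
  then show ?thesis using ge_one_powr_ge_zero[of q v] assms by simp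
qed

lemma abs_diff_le_by_mean_value:
  fixes f f' :: "real \<Rightarrow> real"
  assumes deriv: "\<And>r. s \<le> r \<Longrightarrow> r \<le> t \<Longrightarrow> (f has_real_derivative f' r) (at r)"
    and f'_le: "\<And>r. s \<le> r \<Longrightarrow> r \<le> t \<Longrightarrow> \<bar>f' r\<bar> \<le> K * max 1 r powr (- 3 / 2)"
    and "s < t"
  shows "\<bar>f t - f s\<bar> \<le> K * max 1 s powr (- 1 / 2) * ((t - s) / max 1 s)"
proof -
  obtain z where z: "s < z" "z < t" "f t - f s = (t - s) * f' z"
    using MVT2[OF \<open>s < t\<close>, of f f'] deriv by force
  have "0 \<le> K * max 1 s powr (- 3 / 2)" using f'_le[of s] \<open>s < t\<close> by (meson abs_ge_zero order.trans order_refl less_imp_le)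
  moreover have "0 < max 1 s powr (- 3 / 2)" by (auto simp: max_def)
  ultimately have K: "0 \<le> K" by (simp add: zero_le_mult_iff)
  have "\<bar>f t - f s\<bar> \<le> (t - s) * (K * max 1 z powr (- 3 / 2))"
    unfolding z(3) abs_mult using f'_le[of z] z by (intro mult_mono) auto
  also have "\<dots> \<le> (t - s) * (K * max 1 s powr (- 3 / 2))"
    using z K by (intro mult_left_mono powr_mono2') auto
  also have "max 1 s powr (- 3 / 2) = max 1 s powr (- 1 / 2) / max 1 s"
    using powr_diff[of "max 1 s" "- 1 / 2" 1] by simp
  finally show ?thesis by (simp add: mult_ac)
qed

lemma abs_diff_le_by_decay:
  fixes f :: "real \<Rightarrow> real"
  assumes "\<bar>f s\<bar> \<le> K * max 1 s powr (- 1 / 2)" "\<bar>f t\<bar> \<le> K * max 1 t powr (- 1 / 2)" "s \<le> t"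
  shows "\<bar>f t - f s\<bar> \<le> 2 * K * max 1 s powr (- 1 / 2)"
proof -
  have "0 \<le> K * max 1 s powr (- 1 / 2)" using assms(1) by (meson abs_ge_zero order.trans)
  moreover have "0 < max 1 s powr (- 1 / 2)" by (auto simp: max_def)
  ultimately have "0 \<le> K" by (simp add: zero_le_mult_iff)
  moreover have "max 1 t powr (- 1 / 2) \<le> max 1 s powr (- 1 / 2)"
    using assms(3) by (intro powr_mono2') auto
  ultimately have "\<bar>f t\<bar> \<le> K * max 1 s powr (- 1 / 2)"
    using assms(2) by (meson order.trans mult_left_mono)
  then show ?thesis using assms(1) by linarith
qed

lemma hoelder_of_decay_bounds:
  fixes f f' :: "real \<Rightarrow> real"
  assumes deriv: "\<And>r. 0 \<le> r \<Longrightarrow> r \<le> L \<Longrightarrow> (f has_real_derivative f' r) (at r)"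
    and f_le: "\<And>r. 0 \<le> r \<Longrightarrow> r \<le> L \<Longrightarrow> \<bar>f r\<bar> \<le> K0 * max 1 r powr (- 1 / 2)"
    and f'_le: "\<And>r. 0 \<le> r \<Longrightarrow> r \<le> L \<Longrightarrow> \<bar>f' r\<bar> \<le> K1 * max 1 r powr (- 3 / 2)"
    and st: "0 \<le> s" "s < t" "t \<le> L" and v: "0 \<le> v" "v \<le> 1"
  shows "\<bar>f t - f s\<bar> \<le> (2 * K0 + K1) * max 1 s powr (- 1 / 2 - v) * (t - s) powr v"
proof -
  define S where "S = max 1 s"
  define q where "q = (t - s) / S"
  have S: "1 \<le> S" "0 < S powr (- 1 / 2)" by (auto simp: S_def)
  have q: "0 \<le> q" using st S by (simp add: q_def)
  have small: "\<bar>f t - f s\<bar> \<le> K1 * S powr (- 1 / 2) * q"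
    unfolding S_def q_def using st by (intro abs_diff_le_by_mean_value[where f' = f'] deriv f'_le) auto
  have large: "\<bar>f t - f s\<bar> \<le> 2 * K0 * S powr (- 1 / 2)"
    unfolding S_def using st by (intro abs_diff_le_by_decay f_le) auto
  have "0 \<le> K0 * S powr (- 1 / 2)" "0 \<le> K1 * S powr (- 3 / 2)"
    using f_le[of s] f'_le[of s] st unfolding S_def by (meson abs_ge_zero order.trans less_imp_le order.strict_trans1)+
  then have K: "0 \<le> K0" "0 \<le> K1" using S by (simp_all add: zero_le_mult_iff)
  have "\<bar>f t - f s\<bar> \<le> (2 * K0 + K1) * S powr (- 1 / 2) * min 1 q"
  proof (cases "q \<le> 1")
    case True
    have "K1 * S powr (- 1 / 2) * q \<le> (2 * K0 + K1) * S powr (- 1 / 2) * q"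
      using K S q by (intro mult_right_mono) auto
    then show ?thesis using small True by (simp add: min_absorb2)
  next
    case False
    have "2 * K0 * S powr (- 1 / 2) \<le> (2 * K0 + K1) * S powr (- 1 / 2)"
      using K S by (intro mult_right_mono) auto
    then show ?thesis using large False by (simp add: min_absorb1)
  qed
  also have "\<dots> \<le> (2 * K0 + K1) * S powr (- 1 / 2) * q powr v"
    using K q v by (intro mult_left_mono min_one_le_powr) auto
  also have "\<dots> = (2 * K0 + K1) * S powr (- 1 / 2 - v) * (t - s) powr v"
    using S by (simp add: q_def powr_divide powr_diff)
  finally show ?thesis unfolding S_def .
qed

lemma heat_kernel_hoelder:
  assumes "0 \<le> s" "s < t" "0 \<le> v" "v \<le> 1"
  shows "\<bar>heat_kernel t n - heat_kernel s n\<bar> \<le> 3 * heat_const * max 1 s powr (- 1 / 2 - v) * (t - s) powr v"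
  using hoelder_of_decay_bounds[OF heat_kernel_has_real_derivative abs_heat_kernel_le abs_heat_laplacian_le
      assms(1,2) order.refl assms(3,4)]
  by simp

section \<open>Geometric tails of the heat kernel\<close>

definition heat_tail :: "real \<Rightarrow> int \<Rightarrow> real \<Rightarrow> real" where
  "heat_tail \<mu> c r = (\<Sum>j. \<mu> ^ j * heat_kernel r (c + int j))"

lemma exp_moment_rate_inverse: "exp_moment_rate (inverse q) = exp_moment_rate q"
  by (simp add: exp_moment_rate_def add.commute)

lemma heat_tail_partial_sum_le:
  assumes "\<mu> > 0" "0 \<le> r"
  shows "(\<Sum>j<N. \<mu> ^ j * heat_kernel r (c + int j)) \<le> max \<mu> (inverse \<mu>) powi (- c) * exp (r * exp_moment_rate \<mu>)"
proof -
  \<comment> \<open>\<open>q \<ge> 1\<close> dominates \<open>\<mu>\<close> and has the same exponential-moment rate\<close>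
  define q where "q = max \<mu> (inverse \<mu>)"
  have q: "\<mu> \<le> q" "0 < q" using assms(1) by (auto simp: q_def)
  have "(\<Sum>j<N. \<mu> ^ j * heat_kernel r (c + int j)) \<le> (\<Sum>j<N. q powi (- c) * (q powi (c + int j) * heat_kernel r (c + int j)))"
  proof (rule sum_mono)
    fix j
    have "\<mu> ^ j \<le> q powi (- c) * q powi (c + int j)"
      using q assms(1) by (simp add: power_int_add[symmetric] power_mono)
    then show "\<mu> ^ j * heat_kernel r (c + int j) \<le> q powi (- c) * (q powi (c + int j) * heat_kernel r (c + int j))"
      using heat_kernel_nonneg[OF assms(2)] by (simp add: mult_right_mono mult.assoc[symmetric])
  qed
  also have "\<dots> = q powi (- c) * (\<Sum>n\<in>(\<lambda>j. c + int j) ` {..<N}. q powi n * heat_kernel r n)"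
    by (subst sum.reindex) (auto simp: inj_on_def sum_distrib_left)
  also have "\<dots> \<le> q powi (- c) * exp (r * exp_moment_rate q)"
    using q assms by (intro mult_left_mono heat_kernel_exp_moment) auto
  also have "exp_moment_rate q = exp_moment_rate \<mu>"
    by (simp add: q_def max_def exp_moment_rate_inverse)
  finally show ?thesis unfolding q_def .
qed

lemma summable_heat_tail:
  assumes "\<mu> > 0" "0 \<le> r"
  shows "summable (\<lambda>j. \<mu> ^ j * heat_kernel r (c + int j))"
  using assms heat_kernel_nonneg[OF assms(2)]
  by (intro summableI_nonneg_bounded[OF _ heat_tail_partial_sum_le]) auto

lemma heat_tail_nonneg: "\<mu> > 0 \<Longrightarrow> 0 \<le> r \<Longrightarrow> 0 \<le> heat_tail \<mu> c r"
  unfolding heat_tail_def by (intro suminf_nonneg summable_heat_tail) (simp_all add: heat_kernel_nonneg)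

lemma heat_tail_le:
  assumes "\<mu> > 0" "0 \<le> r" "0 \<le> c"
  shows "heat_tail \<mu> c r \<le> exp (r * exp_moment_rate \<mu>)"
proof -
  have "1 \<le> max \<mu> (inverse \<mu>)"
    using assms(1) by (simp add: le_max_iff_disj one_le_inverse_iff) linarith
  moreover have "max \<mu> (inverse \<mu>) powi (- c) = inverse (max \<mu> (inverse \<mu>) ^ nat c)"
    using assms(3) by (simp add: power_int_minus power_int_def power_inverse)
  ultimately have "max \<mu> (inverse \<mu>) powi (- c) \<le> 1"
    by (simp add: inverse_le_1_iff one_le_power)
  then have "max \<mu> (inverse \<mu>) powi (- c) * exp (r * exp_moment_rate \<mu>) \<le> exp (r * exp_moment_rate \<mu>)"
    using mult_right_mono[of _ 1 "exp (r * exp_moment_rate \<mu>)"] by simp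
  then show ?thesis
    unfolding heat_tail_def
    by (intro suminf_le_const summable_heat_tail assms order.trans[OF heat_tail_partial_sum_le])
qed

lemma heat_tail_unfold:
  assumes "\<mu> > 0" "0 \<le> r"
  shows "heat_tail \<mu> c r = heat_kernel r c + \<mu> * heat_tail \<mu> (c + 1) r"
proof -
  have "heat_tail \<mu> c r = heat_kernel r c + (\<Sum>j. \<mu> ^ Suc j * heat_kernel r (c + int (Suc j)))"
    unfolding heat_tail_def by (subst suminf_split_head[OF summable_heat_tail[OF assms]]) simp
  also have "(\<Sum>j. \<mu> ^ Suc j * heat_kernel r (c + int (Suc j))) = \<mu> * heat_tail \<mu> (c + 1) r"
    unfolding heat_tail_def
    by (subst suminf_mult[OF summable_heat_tail[OF assms], symmetric]) (simp add: algebra_simps)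
  finally show ?thesis .
qed

lemma suminf_heat_laplacian_tail:
  assumes "\<mu> > 0" "0 \<le> r"
  shows "(\<Sum>j. \<mu> ^ j * heat_laplacian r (c + int j))
    = exp_moment_rate \<mu> * heat_tail \<mu> c r + (heat_kernel r (c - 1) - heat_kernel r c / \<mu>) / 2"
proof -
  have lap: "\<mu> ^ j * heat_laplacian r (c + int j)
      = \<mu> ^ j * heat_kernel r (c + 1 + int j) / 2 + \<mu> ^ j * heat_kernel r (c - 1 + int j) / 2
        - \<mu> ^ j * heat_kernel r (c + int j)" for j
    by (simp add: heat_laplacian_def algebra_simps add_divide_distrib)
  have "(\<lambda>j. \<mu> ^ j * heat_laplacian r (c + int j))
      sums (heat_tail \<mu> (c + 1) r / 2 + heat_tail \<mu> (c - 1) r / 2 - heat_tail \<mu> c r)"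
    unfolding lap heat_tail_def
    by (intro sums_diff sums_add sums_divide summable_sums summable_heat_tail assms)
  then have "(\<Sum>j. \<mu> ^ j * heat_laplacian r (c + int j))
      = heat_tail \<mu> (c + 1) r / 2 + heat_tail \<mu> (c - 1) r / 2 - heat_tail \<mu> c r"
    by (rule sums_unique[symmetric])
  also have "\<dots> = exp_moment_rate \<mu> * heat_tail \<mu> c r + (heat_kernel r (c - 1) - heat_kernel r c / \<mu>) / 2"
    using heat_tail_unfold[OF assms, of c] heat_tail_unfold[OF assms, of "c - 1"] assms(1)
    by (simp add: exp_moment_rate_def field_simps)
  finally show ?thesis .
qed

lemma uniformly_convergent_heat_laplacian_tail:
  assumes "\<mu> > 0" "0 \<le> R"
  shows "uniformly_convergent_on {-R..R} (\<lambda>N x. \<Sum>j<N. \<mu> ^ j * heat_laplacian x (c + int j))"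
proof (rule Weierstrass_m_test')
  define M where "M j = exp (2 * R) * (\<mu> ^ j * heat_kernel R (c + 1 + int j)
    + \<mu> ^ j * heat_kernel R (c - 1 + int j) + \<mu> ^ j * heat_kernel R (c + int j))" for j
  show "summable M"
    unfolding M_def by (intro summable_mult summable_add summable_heat_tail assms)
  fix j x assume "x \<in> {-R..R}"
  then have dom: "\<bar>heat_kernel x n\<bar> \<le> exp (2 * R) * heat_kernel R n" for n
    by (intro abs_heat_kernel_le_heat_kernel) auto
  have "\<bar>heat_laplacian x (c + int j)\<bar>
      \<le> \<bar>heat_kernel x (c + int j + 1)\<bar> + \<bar>heat_kernel x (c + int j - 1)\<bar> + \<bar>heat_kernel x (c + int j)\<bar>"
    unfolding heat_laplacian_def add_divide_distrib by linarith
  also have "\<dots> \<le> exp (2 * R) * (heat_kernel R (c + 1 + int j) + heat_kernel R (c - 1 + int j) + heat_kernel R (c + int j))"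
    using dom[of "c + int j + 1"] dom[of "c + int j - 1"] dom[of "c + int j"] by (simp add: algebra_simps)
  finally have "\<mu> ^ j * \<bar>heat_laplacian x (c + int j)\<bar> \<le> \<mu> ^ j * (exp (2 * R) *
      (heat_kernel R (c + 1 + int j) + heat_kernel R (c - 1 + int j) + heat_kernel R (c + int j)))"
    using assms(1) by (intro mult_left_mono) auto
  then show "norm (\<mu> ^ j * heat_laplacian x (c + int j)) \<le> M j"
    using assms(1) by (simp add: M_def abs_mult algebra_simps)
qed

lemma heat_tail_has_real_derivative:
  assumes "\<mu> > 0" "0 \<le> r"
  shows "((\<lambda>r. heat_tail \<mu> c r) has_real_derivative
           exp_moment_rate \<mu> * heat_tail \<mu> c r + (heat_kernel r (c - 1) - heat_kernel r c / \<mu>) / 2) (at r)"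
proof -
  define R where "R = r + 1"
  have R: "0 \<le> R" using assms(2) by (simp add: R_def)
  have deriv: "((\<lambda>x. \<mu> ^ j * heat_kernel x (c + int j)) has_field_derivative \<mu> ^ j * heat_laplacian x (c + int j))
      (at x within {-R..R})" for j x
    by (rule has_field_derivative_at_within, rule DERIV_cmult, rule heat_kernel_has_real_derivative)
  have "((\<lambda>x. \<Sum>j. \<mu> ^ j * heat_kernel x (c + int j)) has_field_derivative
      (\<Sum>j. \<mu> ^ j * heat_laplacian r (c + int j))) (at r)"
    by (rule has_field_derivative_series'(2)[OF _ deriv uniformly_convergent_heat_laplacian_tail[OF assms(1) R, of c]
          _ summable_heat_tail[OF assms(1) R, of c]])
       (use R assms(2) in \<open>auto simp: R_def\<close>)
  then show ?thesis
    unfolding suminf_heat_laplacian_tail[OF assms] heat_tail_def[abs_def] .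
qed

section \<open>The Robin kernel\<close>

lemma robin_kernel_eq_heat_tail:
  assumes "muA A \<epsilon> > 0" "0 \<le> r"
  shows "robin_kernel A \<epsilon> r x y = heat_kernel r (int x - int y) + muA A \<epsilon> * heat_kernel r (int x + int y + 1)
     + ((muA A \<epsilon>)\<^sup>2 - 1) * heat_tail (muA A \<epsilon>) (int x + int y + 2) r"
proof -
  define \<mu> where "\<mu> = muA A \<epsilon>"
  have "(\<lambda>j. heat_kernel r (int x + int y + int (j + 2)) * \<mu> ^ (j + 2))
      = (\<lambda>j. \<mu>\<^sup>2 * (\<mu> ^ j * heat_kernel r (int x + int y + 2 + int j)))"
    by (simp add: power_add power2_eq_square algebra_simps)
  then have "(\<Sum>j. heat_kernel r (int x + int y + int (j + 2)) * \<mu> ^ (j + 2)) = \<mu>\<^sup>2 * heat_tail \<mu> (int x + int y + 2) r"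
    unfolding heat_tail_def using assms by (simp add: \<mu>_def suminf_mult summable_heat_tail)
  moreover have "(1 - \<mu> powi (-2)) * \<mu>\<^sup>2 = \<mu>\<^sup>2 - 1"
    using assms(1) by (simp add: \<mu>_def power_int_minus field_simps)
  ultimately show ?thesis
    unfolding robin_kernel_def \<mu>_def[symmetric] by (simp add: algebra_simps)
qed

context
  fixes A T \<epsilon> :: real
  assumes T: "0 < T" and eps: "0 < \<epsilon>" and A_eps: "\<bar>A\<bar> * \<epsilon> \<le> 1 / 2"
begin

lemma muA_near_one: "\<bar>muA A \<epsilon> - 1\<bar> = \<bar>A\<bar> * \<epsilon>" "1 / 2 \<le> muA A \<epsilon>" "muA A \<epsilon> \<le> 3 / 2"
proof -
  show "\<bar>muA A \<epsilon> - 1\<bar> = \<bar>A\<bar> * \<epsilon>" using eps by (simp add: muA_def abs_mult)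
  then show "1 / 2 \<le> muA A \<epsilon>" "muA A \<epsilon> \<le> 3 / 2" using A_eps by linarith+
qed

lemma abs_muA_sq_minus_one_le: "\<bar>(muA A \<epsilon>)\<^sup>2 - 1\<bar> \<le> 5 / 2 * (\<bar>A\<bar> * \<epsilon>)"
proof -
  have "\<bar>(muA A \<epsilon>)\<^sup>2 - 1\<bar> = \<bar>muA A \<epsilon> - 1\<bar> * \<bar>muA A \<epsilon> + 1\<bar>"
    by (simp add: power2_eq_square abs_mult[symmetric] algebra_simps)
  also have "\<dots> \<le> (\<bar>A\<bar> * \<epsilon>) * (5 / 2)"
    unfolding muA_near_one(1) using muA_near_one(2,3) eps by (intro mult_left_mono) auto
  finally show ?thesis by simp
qed

lemma exp_moment_rate_muA: "0 \<le> exp_moment_rate (muA A \<epsilon>)" "exp_moment_rate (muA A \<epsilon>) \<le> (\<bar>A\<bar> * \<epsilon>)\<^sup>2"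
proof -
  define \<mu> where "\<mu> = muA A \<epsilon>"
  have \<mu>: "1 / 2 \<le> \<mu>" "(\<mu> - 1)\<^sup>2 = (\<bar>A\<bar> * \<epsilon>)\<^sup>2"
    using muA_near_one(2) power2_abs[of "\<mu> - 1"] by (simp_all add: \<mu>_def muA_near_one(1))
  have rate: "exp_moment_rate \<mu> = (\<mu> - 1)\<^sup>2 / (2 * \<mu>)"
    using \<mu> by (simp add: exp_moment_rate_def field_simps power2_eq_square)
  show "0 \<le> exp_moment_rate (muA A \<epsilon>)" using \<mu> by (simp add: rate flip: \<mu>_def)
  have "(\<mu> - 1)\<^sup>2 / (2 * \<mu>) \<le> (\<mu> - 1)\<^sup>2 / 1" using \<mu> by (intro divide_left_mono) auto
  then show "exp_moment_rate (muA A \<epsilon>) \<le> (\<bar>A\<bar> * \<epsilon>)\<^sup>2" using \<mu> by (simp add: rate flip: \<mu>_def)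
qed

lemma abs_one_minus_inverse_muA_le: "\<bar>1 - 1 / muA A \<epsilon>\<bar> \<le> 2 * (\<bar>A\<bar> * \<epsilon>)"
proof -
  have "\<bar>1 - 1 / muA A \<epsilon>\<bar> = \<bar>muA A \<epsilon> - 1\<bar> / muA A \<epsilon>"
    using muA_near_one by (simp add: field_simps abs_div_pos)
  also have "\<dots> \<le> (\<bar>A\<bar> * \<epsilon>) / (1 / 2)"
    unfolding muA_near_one(1) using muA_near_one(2) eps by (intro divide_left_mono) auto
  finally show ?thesis by simp
qed

lemma A_eps_le_decay:
  assumes "0 \<le> r" "r \<le> T / \<epsilon>\<^sup>2"
  shows "\<bar>A\<bar> * \<epsilon> \<le> (1 / 2 + \<bar>A\<bar> * sqrt T) * max 1 r powr (- 1 / 2)"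
proof (cases "r \<le> 1")
  case True
  have "0 \<le> \<bar>A\<bar> * sqrt T" using T by simp
  then show ?thesis using True A_eps by (simp add: max_def)
next
  case False
  have "sqrt (\<epsilon>\<^sup>2 * r) \<le> sqrt T"
    using assms eps by (intro real_sqrt_le_mono) (simp add: field_simps)
  then have "\<epsilon> \<le> sqrt T * r powr (- 1 / 2)"
    using False eps by (simp add: real_sqrt_mult powr_minus_divide powr_half_sqrt field_simps)
  then have "\<bar>A\<bar> * \<epsilon> \<le> \<bar>A\<bar> * sqrt T * r powr (- 1 / 2)"
    by (simp add: mult_left_mono mult.assoc)
  also have "\<dots> \<le> (1 / 2 + \<bar>A\<bar> * sqrt T) * r powr (- 1 / 2)"
    by (intro mult_right_mono) auto
  finally show ?thesis using False by (simp add: max_def)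
qed

lemma heat_tail_muA_le:
  assumes "0 \<le> c" "0 \<le> r" "r \<le> T / \<epsilon>\<^sup>2"
  shows "heat_tail (muA A \<epsilon>) c r \<le> exp (A\<^sup>2 * T)"
proof -
  have "r * exp_moment_rate (muA A \<epsilon>) \<le> r * (\<bar>A\<bar> * \<epsilon>)\<^sup>2"
    using assms(2) exp_moment_rate_muA by (intro mult_left_mono) auto
  also have "\<dots> = (r * \<epsilon>\<^sup>2) * A\<^sup>2" by (simp add: power_mult_distrib)
  also have "\<dots> \<le> T * A\<^sup>2"
    using assms(2,3) eps by (intro mult_right_mono) (auto simp: field_simps)
  finally have "exp (r * exp_moment_rate (muA A \<epsilon>)) \<le> exp (A\<^sup>2 * T)" by (simp add: mult.commute)
  moreover have "heat_tail (muA A \<epsilon>) c r \<le> exp (r * exp_moment_rate (muA A \<epsilon>))"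
    using muA_near_one(2) assms by (intro heat_tail_le) auto
  ultimately show ?thesis by linarith
qed

lemma robin_tail_decay:
  defines "D \<equiv> 1 / 2 + \<bar>A\<bar> * sqrt T" and "E \<equiv> exp (A\<^sup>2 * T)"
  assumes "0 \<le> c" "0 \<le> r" "r \<le> T / \<epsilon>\<^sup>2"
  shows "\<bar>((muA A \<epsilon>)\<^sup>2 - 1) * heat_tail (muA A \<epsilon>) c r\<bar> \<le> 5 / 2 * D * E * max 1 r powr (- 1 / 2)"
proof -
  have "\<bar>((muA A \<epsilon>)\<^sup>2 - 1) * heat_tail (muA A \<epsilon>) c r\<bar> \<le> 5 / 2 * (\<bar>A\<bar> * \<epsilon>) * E"
    unfolding abs_mult E_def
    using abs_muA_sq_minus_one_le heat_tail_muA_le[OF assms(3-5)]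
      heat_tail_nonneg[of "muA A \<epsilon>" r c] muA_near_one assms(4)
    by (intro mult_mono) auto
  also have "\<dots> \<le> 5 / 2 * (D * max 1 r powr (- 1 / 2)) * E"
    unfolding D_def E_def using A_eps_le_decay[OF assms(4,5)] by (intro mult_right_mono mult_left_mono) auto
  finally show ?thesis by (simp add: mult_ac)
qed

lemma abs_heat_tail_deriv_muA_le:
  defines "D \<equiv> 1 / 2 + \<bar>A\<bar> * sqrt T" and "E \<equiv> exp (A\<^sup>2 * T)"
  assumes "0 \<le> c" "0 \<le> r" "r \<le> T / \<epsilon>\<^sup>2"
  shows "\<bar>exp_moment_rate (muA A \<epsilon>) * heat_tail (muA A \<epsilon>) c r
            + (heat_kernel r (c - 1) - heat_kernel r c / muA A \<epsilon>) / 2\<bar>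
         \<le> (D\<^sup>2 * E + heat_const + D * heat_const) * max 1 r powr (- 1)"
proof -
  define a where "a = \<bar>A\<bar> * \<epsilon>"
  define \<mu> where "\<mu> = muA A \<epsilon>"
  define w where "w = max 1 r powr (- 1 / 2)"
  have w: "0 \<le> w" "max 1 r powr (- 1) = w\<^sup>2"
    by (simp_all add: w_def powr_power)
  have a: "0 \<le> a" "a \<le> D * w"
    using eps A_eps_le_decay[OF assms(4,5)] by (auto simp: a_def D_def w_def)
  have H: "0 \<le> heat_const" by (simp add: heat_const_def)
  have "\<bar>exp_moment_rate \<mu> * heat_tail \<mu> c r\<bar> \<le> a\<^sup>2 * E"
    using exp_moment_rate_muA heat_tail_muA_le[OF assms(3-5)]
      heat_tail_nonneg[of \<mu> r c] muA_near_one assms(4)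
    by (auto simp: \<mu>_def a_def E_def abs_mult intro!: mult_mono)
  also have "\<dots> \<le> (D * w)\<^sup>2 * E"
    using a by (intro mult_right_mono power_mono) (auto simp: E_def)
  finally have rate: "\<bar>exp_moment_rate \<mu> * heat_tail \<mu> c r\<bar> \<le> D\<^sup>2 * E * w\<^sup>2"
    by (simp add: power_mult_distrib mult_ac)
  have grad: "\<bar>(heat_kernel r c - heat_kernel r (c - 1)) / 2\<bar> \<le> heat_const * w\<^sup>2"
    using abs_heat_kernel_diff_le[OF assms(4), of "c - 1"] H w(1) unfolding w(2) by simp
  have "\<bar>heat_kernel r c * (1 - 1 / \<mu>) / 2\<bar> = \<bar>heat_kernel r c\<bar> * (\<bar>1 - 1 / \<mu>\<bar> / 2)"
    by (simp add: abs_mult)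
  also have "\<dots> \<le> heat_const * w * a"
    using abs_heat_kernel_le[OF assms(4), of c] abs_one_minus_inverse_muA_le H w(1)
    by (intro mult_mono) (auto simp: \<mu>_def a_def w_def)
  also have "\<dots> \<le> heat_const * w * (D * w)"
    using a H w(1) by (intro mult_left_mono) auto
  finally have shift: "\<bar>heat_kernel r c * (1 - 1 / \<mu>) / 2\<bar> \<le> D * heat_const * w\<^sup>2"
    by (simp add: power2_eq_square mult_ac)
  have "exp_moment_rate \<mu> * heat_tail \<mu> c r + (heat_kernel r (c - 1) - heat_kernel r c / \<mu>) / 2
      = exp_moment_rate \<mu> * heat_tail \<mu> c r - (heat_kernel r c - heat_kernel r (c - 1)) / 2
        + heat_kernel r c * (1 - 1 / \<mu>) / 2"
    by (simp add: algebra_simps diff_divide_distrib)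
  also have "\<bar>\<dots>\<bar> \<le> (D\<^sup>2 * E + heat_const + D * heat_const) * w\<^sup>2"
    unfolding distrib_right using rate grad shift by linarith
  finally show ?thesis unfolding w(2) \<mu>_def .
qed

lemma robin_tail_deriv_decay:
  defines "D \<equiv> 1 / 2 + \<bar>A\<bar> * sqrt T" and "E \<equiv> exp (A\<^sup>2 * T)"
  assumes "0 \<le> c" "0 \<le> r" "r \<le> T / \<epsilon>\<^sup>2"
  shows "\<bar>((muA A \<epsilon>)\<^sup>2 - 1) * (exp_moment_rate (muA A \<epsilon>) * heat_tail (muA A \<epsilon>) c r
            + (heat_kernel r (c - 1) - heat_kernel r c / muA A \<epsilon>) / 2)\<bar>
         \<le> 5 / 2 * D * (D\<^sup>2 * E + heat_const + D * heat_const) * max 1 r powr (- 3 / 2)"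
proof -
  define w where "w = max 1 r powr (- 1 / 2)"
  have w: "0 \<le> w" "max 1 r powr (- 1) = w\<^sup>2" "max 1 r powr (- 3 / 2) = w ^ 3"
    by (simp_all add: w_def powr_power)
  have "0 \<le> D" using T by (simp add: D_def)
  then have "\<bar>((muA A \<epsilon>)\<^sup>2 - 1) * (exp_moment_rate (muA A \<epsilon>) * heat_tail (muA A \<epsilon>) c r
            + (heat_kernel r (c - 1) - heat_kernel r c / muA A \<epsilon>) / 2)\<bar>
      \<le> 5 / 2 * (D * w) * ((D\<^sup>2 * E + heat_const + D * heat_const) * w\<^sup>2)"
    unfolding abs_mult
    using abs_muA_sq_minus_one_le A_eps_le_decay[OF assms(4,5), folded w_def D_def]
      abs_heat_tail_deriv_muA_le[OF assms(3-5), folded D_def E_def, unfolded w(2)] eps w(1)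
    by (intro mult_mono) auto
  then show ?thesis unfolding w(3) by (simp add: power2_eq_square power3_eq_cube mult_ac)
qed

lemma robin_tail_hoelder:
  defines "D \<equiv> 1 / 2 + \<bar>A\<bar> * sqrt T" and "E \<equiv> exp (A\<^sup>2 * T)"
  assumes "0 \<le> c" "0 \<le> s" "s < t" "t \<le> T / \<epsilon>\<^sup>2" "0 \<le> v" "v \<le> 1"
  shows "\<bar>((muA A \<epsilon>)\<^sup>2 - 1) * heat_tail (muA A \<epsilon>) c t - ((muA A \<epsilon>)\<^sup>2 - 1) * heat_tail (muA A \<epsilon>) c s\<bar>
    \<le> (5 * D * E + 5 / 2 * D * (D\<^sup>2 * E + heat_const + D * heat_const)) * max 1 s powr (- 1 / 2 - v) * (t - s) powr v"
proof -
  have "0 < muA A \<epsilon>" using muA_near_one by simp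
  then have "((\<lambda>r. ((muA A \<epsilon>)\<^sup>2 - 1) * heat_tail (muA A \<epsilon>) c r) has_real_derivative
      ((muA A \<epsilon>)\<^sup>2 - 1) * (exp_moment_rate (muA A \<epsilon>) * heat_tail (muA A \<epsilon>) c r
        + (heat_kernel r (c - 1) - heat_kernel r c / muA A \<epsilon>) / 2)) (at r)" if "0 \<le> r" for r
    using that by (intro DERIV_cmult heat_tail_has_real_derivative)
  from hoelder_of_decay_bounds[OF this robin_tail_decay robin_tail_deriv_decay]
  show ?thesis using assms(3-) unfolding D_def E_def by (simp add: algebra_simps)
qed

end

lemma min_one_pow_eq_max_powr:
  assumes "0 \<le> s" "0 \<le> v"
  shows "min_one_pow s v = max 1 s powr (- 1 / 2 - v)"
proof (cases "s \<le> 1")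
  case True
  have "1 \<le> s powr (- 1 / 2 - v)" if "0 < s"
    using powr_mono'[of "- 1 / 2 - v" 0 s] that True assms by simp
  then show ?thesis using True assms by (auto simp: min_one_pow_def max_def)
next
  case False
  then have "s powr (- 1 / 2 - v) \<le> s powr 0"
    using assms by (intro powr_mono) auto
  then show ?thesis using False by (simp add: min_one_pow_def max_def)
qed

lemma robin_kernel_hoelder:
  fixes A T :: real
  assumes "0 < T"
  obtains C where "\<And>\<epsilon> s t x y v. 0 < \<epsilon> \<Longrightarrow> \<bar>A\<bar> * \<epsilon> \<le> 1 / 2 \<Longrightarrow> 0 \<le> s \<Longrightarrow> s < t \<Longrightarrow> t \<le> T / \<epsilon>\<^sup>2
    \<Longrightarrow> 0 \<le> v \<Longrightarrow> v \<le> 1 \<Longrightarrow>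
    \<bar>robin_kernel A \<epsilon> t x y - robin_kernel A \<epsilon> s x y\<bar> \<le> C * min_one_pow s v * (t - s) powr v"
proof
  define D where "D = 1 / 2 + \<bar>A\<bar> * sqrt T"
  define E where "E = exp (A\<^sup>2 * T)"
  define K where "K = 5 * D * E + 5 / 2 * D * (D\<^sup>2 * E + heat_const + D * heat_const)"
  fix \<epsilon> s t v :: real and x y :: nat
  assume eps: "0 < \<epsilon>" "\<bar>A\<bar> * \<epsilon> \<le> 1 / 2" and st: "0 \<le> s" "s < t" "t \<le> T / \<epsilon>\<^sup>2" and v: "0 \<le> v" "v \<le> 1"
  define \<mu> where "\<mu> = muA A \<epsilon>"
  define m where "m = max 1 s powr (- 1 / 2 - v) * (t - s) powr v"
  have \<mu>: "0 < \<mu>" "\<mu> \<le> 3 / 2" using muA_near_one[OF assms eps] by (auto simp: \<mu>_def)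
  have direct: "\<bar>heat_kernel t (int x - int y) - heat_kernel s (int x - int y)\<bar> \<le> 3 * heat_const * m"
    using heat_kernel_hoelder[OF st(1,2) v] by (simp add: m_def mult.assoc)
  have "\<bar>\<mu> * heat_kernel t (int x + int y + 1) - \<mu> * heat_kernel s (int x + int y + 1)\<bar>
      = \<mu> * \<bar>heat_kernel t (int x + int y + 1) - heat_kernel s (int x + int y + 1)\<bar>"
    using \<mu> by (simp add: abs_mult right_diff_distrib[symmetric])
  also have "\<dots> \<le> 3 / 2 * (3 * heat_const * m)"
    using heat_kernel_hoelder[OF st(1,2) v] \<mu> by (intro mult_mono) (auto simp: m_def mult.assoc)
  finally have reflected: "\<bar>\<mu> * heat_kernel t (int x + int y + 1) - \<mu> * heat_kernel s (int x + int y + 1)\<bar>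
      \<le> 3 / 2 * (3 * heat_const * m)" .
  have tail: "\<bar>(\<mu>\<^sup>2 - 1) * heat_tail \<mu> (int x + int y + 2) t - (\<mu>\<^sup>2 - 1) * heat_tail \<mu> (int x + int y + 2) s\<bar> \<le> K * m"
    using robin_tail_hoelder[OF assms eps _ st v, of "int x + int y + 2"] by (simp add: K_def D_def E_def m_def \<mu>_def mult.assoc)
  have "robin_kernel A \<epsilon> t x y - robin_kernel A \<epsilon> s x y
      = (heat_kernel t (int x - int y) - heat_kernel s (int x - int y))
        + (\<mu> * heat_kernel t (int x + int y + 1) - \<mu> * heat_kernel s (int x + int y + 1))
        + ((\<mu>\<^sup>2 - 1) * heat_tail \<mu> (int x + int y + 2) t - (\<mu>\<^sup>2 - 1) * heat_tail \<mu> (int x + int y + 2) s)"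
    using robin_kernel_eq_heat_tail[of A \<epsilon> t x y] robin_kernel_eq_heat_tail[of A \<epsilon> s x y] \<mu> st
    by (simp add: \<mu>_def)
  then have "\<bar>robin_kernel A \<epsilon> t x y - robin_kernel A \<epsilon> s x y\<bar> \<le> 3 * heat_const * m + 3 / 2 * (3 * heat_const * m) + K * m"
    using direct reflected tail by linarith
  then show "\<bar>robin_kernel A \<epsilon> t x y - robin_kernel A \<epsilon> s x y\<bar>
      \<le> (3 * heat_const + 3 / 2 * (3 * heat_const) + K) * min_one_pow s v * (t - s) powr v"
    using st v by (simp add: m_def min_one_pow_eq_max_powr algebra_simps)
qed

theorem mainTheorem6:
  fixes A T :: real
  assumes "T > 0"
  shows "\<exists>C. \<exists>\<epsilon>0>0. \<forall>\<epsilon>. 0 < \<epsilon> \<and> \<epsilon> < \<epsilon>0 \<longrightarrow>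
           (\<forall>s t x y v. 0 \<le> s \<and> s < t \<and> t \<le> T / \<epsilon>\<^sup>2 \<and> 0 \<le> v \<and> v \<le> 1 \<longrightarrow>
              \<bar>robin_kernel A \<epsilon> t x y - robin_kernel A \<epsilon> s x y\<bar>
                \<le> C * min_one_pow s v * (t - s) powr v)"
proof -
  define \<epsilon>0 where "\<epsilon>0 = 1 / (2 * \<bar>A\<bar> + 2)"
  have pos: "0 < \<epsilon>0" by (simp add: \<epsilon>0_def add_pos_nonneg)
  have small: "\<bar>A\<bar> * \<epsilon> \<le> 1 / 2" if "0 < \<epsilon>" "\<epsilon> < \<epsilon>0" for \<epsilon>
  proof -
    have "(2 * \<bar>A\<bar> + 2) * \<epsilon> \<le> 1" using that by (simp add: \<epsilon>0_def field_simps)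
    then show ?thesis using that by (simp add: algebra_simps)
  qed
  show ?thesis
    by (rule robin_kernel_hoelder[OF assms]) (use pos small in blast)
qed

end
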